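(* Let $r\in\mathbb N$ and let $\xi_1,\dots,\xi_m$ be i.i.d. centred random variables with unit variance and finite moments of all orders, and let $g_1,\dots,g_m$ be i.i.d. standard Gaussian random variables. Define $$\chi_r(\xi):=m^{-r/2}\sum_{\substack{n_1,\dots,n_r\in[m]\\ n_i\ne n_{i+1},\ i=1,\dots,r-1}}\xi_{n_1}\cdots\xi_{n_r},$$ and $\chi_r(g)$ analogously. Then there is a constant $C>0$ depending only on $r$ and on the law of $\xi_1$ such that $$\|\chi_r(\xi)\|_{L^2}^2\le\|\chi_r(g)\|_{L^2}^2+\frac Cm.$$
   Context: $\|X\|_{L^2}=(\mathbb E|X|^2)^{1/2}$. *)

theory Defs
  imports "HOL-Probability.Probability"
begin

text \<open>Admissible index tuples (n_1,...,n_r) in [m]^r (here [m] = {0..<m}) with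
  consecutive entries distinct, represented as extensional functions on {..<r}.\<close>
definition adm_tuples :: "nat \<Rightarrow> nat \<Rightarrow> (nat \<Rightarrow> nat) set" where
  "adm_tuples r m = {n \<in> {..<r} \<rightarrow>\<^sub>E {..<m}. \<forall>i. Suc i < r \<longrightarrow> n i \<noteq> n (Suc i)}"

definition chi :: "nat \<Rightarrow> nat \<Rightarrow> (nat \<Rightarrow> real) \<Rightarrow> real" where
  "chi r m x = inverse (sqrt (real m)) ^ r * (\<Sum>n\<in>adm_tuples r m. \<Prod>i<r. x (n i))"

end

theory Submission
  imports Defs
begin

text \<open>Expanding the square, the second moment of a sum of monomials
  \<open>\<Sum>\<^sub>n \<xi>\<^sub>n\<^sub>1 \<cdots> \<xi>\<^sub>n\<^sub>r\<close> in independent variables is a sum over pairs of index tuples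
  \<open>(n, n')\<close> of products \<open>\<Prod>\<^sub>k M(c\<^sub>k)\<close>, where \<open>M(j)\<close> is the \<open>j\<close>-th moment and \<open>c\<^sub>k\<close> the
  number of times \<open>k\<close> occurs in \<open>n\<close> and \<open>n'\<close> together. If some \<open>c\<^sub>k = 1\<close> the term vanishes
  since the variables are centred; if all \<open>c\<^sub>k \<in> {0, 2}\<close> it equals \<open>1\<close> for \<open>\<xi>\<close> and for
  the Gaussian alike. In the remaining "rich" pairs the \<open>c\<^sub>k\<close>, which sum to \<open>2r\<close>, are all
  \<open>\<ge> 2\<close> and one is \<open>\<ge> 3\<close>, so fewer than \<open>r\<close> distinct indices occur and there are only
  \<open>O(m\<^sup>r\<^sup>-\<^sup>1)\<close> such pairs. Each contributes at most a constant for \<open>\<xi>\<close> and a nonnegative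
  amount for the Gaussian, whose moments are all nonnegative; the normalisation \<open>m\<^sup>-\<^sup>r\<close>
  turns this into \<open>C/m\<close>. The restriction to tuples with distinct consecutive entries plays
  no role.\<close>

definition occurrences :: "nat \<Rightarrow> (nat \<Rightarrow> nat) \<Rightarrow> nat \<Rightarrow> nat" where
  "occurrences r n k = card {i \<in> {..<r}. n i = k}"

lemma occurrences_le: "occurrences r n k \<le> r"
  unfolding occurrences_def by (rule order.trans[OF card_mono[of "{..<r}"]]) auto

lemma occurrences_pos_iff: "0 < occurrences r n k \<longleftrightarrow> k \<in> n ` {..<r}"
  unfolding occurrences_def by (auto simp: card_gt_0_iff)

lemma sum_occurrences:
  assumes "n ` {..<r} \<subseteq> S" "finite S"
  shows "(\<Sum>k\<in>S. occurrences r n k) = r"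
proof -
  have "(\<Sum>k\<in>S. occurrences r n k) = (\<Sum>k\<in>S. \<Sum>i\<in>{i \<in> {..<r}. n i = k}. 1)"
    unfolding occurrences_def by simp
  also have "\<dots> = (\<Sum>i<r. 1)"
    by (rule sum.group) (use assms in auto)
  finally show ?thesis by simp
qed

lemma prod_eq_prod_power_occurrences:
  fixes x :: "nat \<Rightarrow> 'a::comm_monoid_mult"
  assumes "n ` {..<r} \<subseteq> {..<m}"
  shows "(\<Prod>i<r. x (n i)) = (\<Prod>k<m. x k ^ occurrences r n k)"
proof -
  have "(\<Prod>k<m. x k ^ occurrences r n k) = (\<Prod>k<m. \<Prod>i\<in>{i \<in> {..<r}. n i = k}. x (n i))"
    unfolding occurrences_def by (rule prod.cong) auto
  also have "\<dots> = (\<Prod>i<r. x (n i))"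
    by (rule prod.group) (use assms in auto)
  finally show ?thesis by simp
qed

lemma power2_sum_monomials:
  fixes x :: "nat \<Rightarrow> 'a::comm_ring_1"
  assumes "A \<subseteq> {..<r} \<rightarrow>\<^sub>E {..<m}"
  shows "(\<Sum>n\<in>A. \<Prod>i<r. x (n i))\<^sup>2 =
    (\<Sum>n\<in>A. \<Sum>n'\<in>A. \<Prod>k<m. x k ^ (occurrences r n k + occurrences r n' k))"
proof -
  have image: "n ` {..<r} \<subseteq> {..<m}" if "n \<in> A" for n
    using assms that by auto
  have "(\<Prod>i<r. x (n i)) * (\<Prod>i<r. x (n' i)) =
      (\<Prod>k<m. x k ^ (occurrences r n k + occurrences r n' k))" if "n \<in> A" "n' \<in> A" for n n'
    using prod_eq_prod_power_occurrences[OF image[OF that(1)], where x = x]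
      prod_eq_prod_power_occurrences[OF image[OF that(2)], where x = x]
    by (simp add: power_add prod.distrib)
  then show ?thesis
    unfolding power2_eq_square sum_product by (auto intro!: sum.cong)
qed

definition moment :: "real measure \<Rightarrow> nat \<Rightarrow> real" where
  "moment \<nu> j = (\<integral>y. y ^ j \<partial>\<nu>)"

lemma integral_prod_power_PiM:
  fixes m :: nat
  assumes "prob_space \<nu>" "\<And>j. integrable \<nu> (\<lambda>y. y ^ j)"
  shows "integrable (PiM {..<m} (\<lambda>_. \<nu>)) (\<lambda>x. \<Prod>k<m. x k ^ e k)"
    and "(\<integral>x. (\<Prod>k<m. x k ^ e k) \<partial>PiM {..<m} (\<lambda>_. \<nu>)) = (\<Prod>k<m. moment \<nu> (e k))"
proof -
  interpret product_sigma_finite "\<lambda>_. \<nu>"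
    unfolding product_sigma_finite_def using assms(1) prob_space_imp_sigma_finite by blast
  have "integrable (PiM {..<m} (\<lambda>_. \<nu>)) (\<lambda>x. \<Prod>k\<in>{..<m}. (\<lambda>y. y ^ e k) (x k))"
    by (rule product_integrable_prod) (auto simp: assms(2))
  then show "integrable (PiM {..<m} (\<lambda>_. \<nu>)) (\<lambda>x. \<Prod>k<m. x k ^ e k)"
    by simp
  have "(\<integral>x. (\<Prod>k\<in>{..<m}. (\<lambda>y. y ^ e k) (x k)) \<partial>PiM {..<m} (\<lambda>_. \<nu>)) =
      (\<Prod>k<m. \<integral>y. y ^ e k \<partial>\<nu>)"
    by (rule product_integral_prod) (auto simp: assms(2))
  then show "(\<integral>x. (\<Prod>k<m. x k ^ e k) \<partial>PiM {..<m} (\<lambda>_. \<nu>)) = (\<Prod>k<m. moment \<nu> (e k))"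
    by (simp add: moment_def)
qed

lemma integral_power2_sum_monomials:
  fixes m :: nat
  assumes "prob_space \<nu>" "\<And>j. integrable \<nu> (\<lambda>y. y ^ j)" "A \<subseteq> {..<r} \<rightarrow>\<^sub>E {..<m}"
  shows "(\<integral>x. (\<Sum>n\<in>A. \<Prod>i<r. x (n i))\<^sup>2 \<partial>PiM {..<m} (\<lambda>_. \<nu>)) =
    (\<Sum>n\<in>A. \<Sum>n'\<in>A. \<Prod>k<m. moment \<nu> (occurrences r n k + occurrences r n' k))"
  unfolding power2_sum_monomials[OF assms(3)]
  by (simp add: integral_prod_power_PiM[OF assms(1,2)] integrable_sum)

definition rich_pairs :: "nat \<Rightarrow> nat \<Rightarrow> ((nat \<Rightarrow> nat) \<times> (nat \<Rightarrow> nat)) set" where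
  "rich_pairs r m = {(n, n') \<in> ({..<r} \<rightarrow>\<^sub>E {..<m}) \<times> ({..<r} \<rightarrow>\<^sub>E {..<m}).
     (\<forall>k<m. occurrences r n k + occurrences r n' k \<noteq> 1) \<and>
     (\<exists>k<m. occurrences r n k + occurrences r n' k \<ge> 3)}"

lemma finite_rich_pairs: "finite (rich_pairs r m)"
  unfolding rich_pairs_def
  by (rule finite_subset[of _ "({..<r} \<rightarrow>\<^sub>E {..<m}) \<times> ({..<r} \<rightarrow>\<^sub>E {..<m})"])
    (auto intro!: finite_PiE)

lemma card_image_rich_pair_less:
  assumes "(n, n') \<in> rich_pairs r m"
  shows "card (n ` {..<r} \<union> n' ` {..<r}) < r"
proof -
  define S where "S = n ` {..<r} \<union> n' ` {..<r}"
  define c where "c k = occurrences r n k + occurrences r n' k" for k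
  have "finite S" and "S \<subseteq> {..<m}"
    using assms unfolding S_def rich_pairs_def by auto
  have c_ne_1: "c k \<noteq> 1" if "k \<in> S" for k
    using assms \<open>S \<subseteq> {..<m}\<close> that unfolding rich_pairs_def c_def by auto
  obtain k0 where "k0 < m" "c k0 \<ge> 3"
    using assms unfolding rich_pairs_def c_def by auto
  then have "k0 \<in> S"
    using occurrences_pos_iff[of r n k0] occurrences_pos_iff[of r n' k0]
    unfolding S_def c_def by auto
  have c_ge_2: "c k \<ge> 2" if "k \<in> S" for k
    using c_ne_1[OF that] occurrences_pos_iff[of r n k] occurrences_pos_iff[of r n' k] that
    unfolding S_def c_def by fastforce
  have "2 * r = (\<Sum>k\<in>S. c k)"
    using sum_occurrences[of n r S] sum_occurrences[of n' r S] \<open>finite S\<close>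
    unfolding c_def S_def sum.distrib by auto
  also have "\<dots> = (\<Sum>k\<in>S. 2 + (c k - 2))"
    by (rule sum.cong) (auto dest: c_ge_2)
  also have "\<dots> = 2 * card S + (\<Sum>k\<in>S. c k - 2)"
    by (simp only: sum.distrib) simp
  finally have "2 * r = 2 * card S + (\<Sum>k\<in>S. c k - 2)" .
  moreover have "(\<Sum>k\<in>S. c k - 2) \<ge> c k0 - 2"
    by (rule member_le_sum[OF \<open>k0 \<in> S\<close>]) (simp_all add: \<open>finite S\<close>)
  ultimately show ?thesis
    using \<open>c k0 \<ge> 3\<close> unfolding S_def by linarith
qed

lemma ex_PiE_lessThan_image_cover:
  assumes "finite S" "card S \<le> d" "S \<subseteq> Y" "y0 \<in> Y"
  obtains g where "g \<in> {..<d} \<rightarrow>\<^sub>E Y" "S \<subseteq> g ` {..<d}"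
proof -
  obtain e where e: "bij_betw e {..<card S} S"
    using ex_bij_betw_nat_finite[OF assms(1)] by (auto simp: atLeast0LessThan)
  define g where "g = restrict (\<lambda>j. if j < card S then e j else y0) {..<d}"
  have "e j \<in> Y" if "j < card S" for j
    using bij_betwE[OF e] assms(3) that by blast
  then have "g \<in> {..<d} \<rightarrow>\<^sub>E Y"
    using assms(4) unfolding g_def by auto
  moreover have "S \<subseteq> g ` {..<d}"
  proof
    fix y assume "y \<in> S"
    then obtain j where "j < card S" "y = e j"
      using e by (auto simp: bij_betw_def)
    then show "y \<in> g ` {..<d}"
      using assms(2) unfolding g_def by (intro image_eqI[of _ _ j]) auto
  qed
  ultimately show ?thesis by (rule that)
qed

lemma PiE_factor_through_image:
  assumes "f \<in> I \<rightarrow>\<^sub>E S" "S \<subseteq> g ` D"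
  obtains h where "h \<in> I \<rightarrow>\<^sub>E D" "f = restrict (g \<circ> h) I"
proof
  have "f i \<in> g ` D" if "i \<in> I" for i
    using assms that by auto
  then show "restrict (\<lambda>i. inv_into D g (f i)) I \<in> I \<rightarrow>\<^sub>E D"
    and "f = restrict (g \<circ> restrict (\<lambda>i. inv_into D g (f i)) I) I"
    using assms(1) by (auto simp: fun_eq_iff f_inv_into_f inv_into_into PiE_iff extensional_def)
qed

lemma rich_pairs_subset_image:
  assumes "m \<ge> 1"
  shows "rich_pairs r m \<subseteq> (\<lambda>(g, h, h'). (restrict (g \<circ> h) {..<r}, restrict (g \<circ> h') {..<r})) `
    (({..<r - 1} \<rightarrow>\<^sub>E {..<m}) \<times> ({..<r} \<rightarrow>\<^sub>E {..<r - 1}) \<times> ({..<r} \<rightarrow>\<^sub>E {..<r - 1}))"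
    (is "_ \<subseteq> ?F ` ?D")
proof safe
  fix n n' assume rich: "(n, n') \<in> rich_pairs r m"
  define S where "S = n ` {..<r} \<union> n' ` {..<r}"
  have "n \<in> {..<r} \<rightarrow>\<^sub>E S" "n' \<in> {..<r} \<rightarrow>\<^sub>E S" "S \<subseteq> {..<m}" "finite S"
    using rich unfolding rich_pairs_def S_def by auto
  moreover have "card S \<le> r - 1"
    using card_image_rich_pair_less[OF rich] unfolding S_def by simp
  moreover have "0 \<in> {..<m}"
    using assms by simp
  ultimately obtain g where g: "g \<in> {..<r - 1} \<rightarrow>\<^sub>E {..<m}" "S \<subseteq> g ` {..<r - 1}"
    using ex_PiE_lessThan_image_cover[of S "r - 1" "{..<m}" 0] by blast
  obtain h h' where "h \<in> {..<r} \<rightarrow>\<^sub>E {..<r - 1}" "n = restrict (g \<circ> h) {..<r}"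
    and "h' \<in> {..<r} \<rightarrow>\<^sub>E {..<r - 1}" "n' = restrict (g \<circ> h') {..<r}"
    using PiE_factor_through_image[OF \<open>n \<in> _\<close> g(2)] PiE_factor_through_image[OF \<open>n' \<in> _\<close> g(2)]
    by metis
  with g(1) show "(n, n') \<in> ?F ` ?D"
    by (intro image_eqI[of _ _ "(g, h, h')"]) auto
qed

lemma card_rich_pairs: "card (rich_pairs r m) * m \<le> r ^ (2 * r) * m ^ r"
proof (cases "r = 0 \<or> m = 0")
  case True
  then have "r = 0 \<Longrightarrow> rich_pairs r m = {}"
    using card_image_rich_pair_less by fastforce
  with True show ?thesis by auto
next
  case False
  let ?D = "({..<r - 1} \<rightarrow>\<^sub>E {..<m}) \<times> ({..<r} \<rightarrow>\<^sub>E {..<r - 1}) \<times> ({..<r} \<rightarrow>\<^sub>E {..<r - 1})"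
  have "finite ?D"
    by (auto intro!: finite_PiE)
  have "card (rich_pairs r m) \<le> card ((\<lambda>(g, h, h'). (restrict (g \<circ> h) {..<r}, restrict (g \<circ> h') {..<r})) ` ?D)"
    using False by (intro card_mono finite_imageI \<open>finite ?D\<close> rich_pairs_subset_image) simp
  also have "\<dots> \<le> card ?D"
    using \<open>finite ?D\<close> by (rule card_image_le)
  also have "\<dots> = m ^ (r - 1) * (r - 1) ^ r * (r - 1) ^ r"
    by (simp add: card_cartesian_product card_PiE)
  also have "\<dots> \<le> m ^ (r - 1) * r ^ r * r ^ r"
    by (intro mult_mono power_mono) auto
  finally have "card (rich_pairs r m) * m \<le> m ^ (r - 1) * m * (r ^ r * r ^ r)"
    by (simp add: algebra_simps)
  also have "\<dots> = r ^ (2 * r) * m ^ r"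
    using False by (simp add: power_add mult_2 flip: power_Suc2)
  finally show ?thesis .
qed

lemma card_rich_pairs_div_power:
  assumes "m \<ge> 1"
  shows "real (card (rich_pairs r m)) / real m ^ r \<le> real r ^ (2 * r) / real m"
proof -
  have "real (card (rich_pairs r m)) * real m \<le> real r ^ (2 * r) * real m ^ r"
    using card_rich_pairs[of r m] by (metis of_nat_le_iff of_nat_mult of_nat_power)
  then show ?thesis
    using assms by (simp add: field_simps)
qed

lemma prod_moments_le_power:
  fixes M :: "nat \<Rightarrow> real"
  assumes "\<And>j. j \<le> 2 * r \<Longrightarrow> \<bar>M j\<bar> \<le> D ^ j"
    and "n \<in> {..<r} \<rightarrow>\<^sub>E {..<m}" "n' \<in> {..<r} \<rightarrow>\<^sub>E {..<m}"
  shows "(\<Prod>k<m. M (occurrences r n k + occurrences r n' k)) \<le> D ^ (2 * r)"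
proof -
  have image: "n ` {..<r} \<subseteq> {..<m}" "n' ` {..<r} \<subseteq> {..<m}"
    using assms(2,3) by auto
  have exponent_le: "occurrences r n k + occurrences r n' k \<le> 2 * r" for k
    using occurrences_le[of r n k] occurrences_le[of r n' k] by simp
  have "(\<Prod>k<m. M (occurrences r n k + occurrences r n' k)) \<le>
      (\<Prod>k<m. \<bar>M (occurrences r n k + occurrences r n' k)\<bar>)"
    unfolding abs_prod[symmetric] by (rule abs_ge_self)
  also have "\<dots> \<le> (\<Prod>k<m. D ^ occurrences r n k * D ^ occurrences r n' k)"
    by (intro prod_mono) (simp add: assms(1) exponent_le flip: power_add)
  also have "\<dots> = (\<Prod>i<r. D) * (\<Prod>i<r. D)"
    using prod_eq_prod_power_occurrences[OF image(1), where x = "\<lambda>_. D"]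
      prod_eq_prod_power_occurrences[OF image(2), where x = "\<lambda>_. D"]
    by (simp add: prod.distrib)
  also have "\<dots> = D ^ (2 * r)"
    by (simp add: mult_2 power_add)
  finally show ?thesis .
qed

lemma prod_moments_le:
  fixes M G :: "nat \<Rightarrow> real"
  assumes "M 0 = G 0" "M 1 = 0" "G 1 = 0" "M 2 = G 2" "\<And>j. G j \<ge> 0"
    and "\<And>j. j \<le> 2 * r \<Longrightarrow> \<bar>M j\<bar> \<le> D ^ j"
    and "n \<in> {..<r} \<rightarrow>\<^sub>E {..<m}" "n' \<in> {..<r} \<rightarrow>\<^sub>E {..<m}"
  shows "(\<Prod>k<m. M (occurrences r n k + occurrences r n' k)) \<le>
    (\<Prod>k<m. G (occurrences r n k + occurrences r n' k)) +
    (if (n, n') \<in> rich_pairs r m then D ^ (2 * r) else 0)"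
proof (cases "(n, n') \<in> rich_pairs r m")
  case True
  then show ?thesis
    using prod_moments_le_power[OF assms(6-8)] assms(5) by (simp add: add_increasing prod_nonneg)
next
  case False
  define c where "c k = occurrences r n k + occurrences r n' k" for k
  have "(\<exists>k<m. c k = 1) \<or> (\<forall>k<m. c k = 0 \<or> c k = 2)"
    using False assms(7,8) unfolding rich_pairs_def c_def by fastforce
  then have "(\<Prod>k<m. M (c k)) = (\<Prod>k<m. G (c k))"
  proof
    assume "\<exists>k<m. c k = 1"
    then obtain k where "k < m" "c k = 1"
      by blast
    then have "(\<Prod>k<m. M (c k)) = 0" "(\<Prod>k<m. G (c k)) = 0"
      using assms(2,3) by (auto intro!: prod_zero bexI[of _ k])
    then show ?thesis
      by (simp only:)
  next
    assume "\<forall>k<m. c k = 0 \<or> c k = 2"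
    then show ?thesis
      using assms(1,4) by (intro prod.cong) auto
  qed
  then show ?thesis
    using False unfolding c_def by simp
qed

lemma integral_power2_sum_monomials_le:
  fixes D :: real
  assumes "prob_space \<mu>" "\<And>j. integrable \<mu> (\<lambda>y. y ^ j)"
    and "prob_space \<nu>" "\<And>j. integrable \<nu> (\<lambda>y. y ^ j)"
    and "moment \<mu> 1 = 0" "moment \<nu> 1 = 0" "moment \<mu> 2 = moment \<nu> 2" "\<And>j. moment \<nu> j \<ge> 0"
    and "\<And>j. j \<le> 2 * r \<Longrightarrow> \<bar>moment \<mu> j\<bar> \<le> D ^ j" "D \<ge> 0"
    and A: "A \<subseteq> {..<r} \<rightarrow>\<^sub>E {..<m}"
  shows "(\<integral>x. (\<Sum>n\<in>A. \<Prod>i<r. x (n i))\<^sup>2 \<partial>PiM {..<m} (\<lambda>_. \<mu>)) \<le>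
    (\<integral>x. (\<Sum>n\<in>A. \<Prod>i<r. x (n i))\<^sup>2 \<partial>PiM {..<m} (\<lambda>_. \<nu>)) + real (card (rich_pairs r m)) * D ^ (2 * r)"
proof -
  have "finite A"
    using A by (rule finite_subset) (auto intro: finite_PiE)
  have "moment \<mu> 0 = moment \<nu> 0"
    using assms(1,3) by (simp add: moment_def prob_space.prob_space)
  then have "(\<integral>x. (\<Sum>n\<in>A. \<Prod>i<r. x (n i))\<^sup>2 \<partial>PiM {..<m} (\<lambda>_. \<mu>)) \<le>
    (\<Sum>n\<in>A. \<Sum>n'\<in>A. (\<Prod>k<m. moment \<nu> (occurrences r n k + occurrences r n' k)) +
      (if (n, n') \<in> rich_pairs r m then D ^ (2 * r) else 0))"
    unfolding integral_power2_sum_monomials[OF assms(1,2) A]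
    using A by (intro sum_mono prod_moments_le[where r = r] assms) auto
  also have "\<dots> = (\<integral>x. (\<Sum>n\<in>A. \<Prod>i<r. x (n i))\<^sup>2 \<partial>PiM {..<m} (\<lambda>_. \<nu>)) +
    real (card ((A \<times> A) \<inter> rich_pairs r m)) * D ^ (2 * r)"
    using \<open>finite A\<close>
    by (simp add: integral_power2_sum_monomials[OF assms(3,4) A] sum.distrib
        sum.cartesian_product flip: sum.inter_restrict)
  also have "\<dots> \<le> (\<integral>x. (\<Sum>n\<in>A. \<Prod>i<r. x (n i))\<^sup>2 \<partial>PiM {..<m} (\<lambda>_. \<nu>)) +
    real (card (rich_pairs r m)) * D ^ (2 * r)"
    using assms(10) by (intro add_left_mono mult_right_mono) (auto intro: card_mono finite_rich_pairs)
  finally show ?thesis .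
qed

lemma abs_moment_le:
  assumes "prob_space \<mu>" "integrable \<mu> (\<lambda>y. y ^ j)" "integrable \<mu> (\<lambda>y. \<bar>y\<bar> ^ p)" "j \<le> p"
  shows "\<bar>moment \<mu> j\<bar> \<le> (1 + (\<integral>y. \<bar>y\<bar> ^ p \<partial>\<mu>)) ^ j"
proof (cases "j = 0")
  case True
  then show ?thesis
    using assms(1) by (simp add: moment_def prob_space.prob_space)
next
  case False
  interpret prob_space \<mu> by fact
  have abs_power_le: "\<bar>y\<bar> ^ j \<le> 1 + \<bar>y\<bar> ^ p" for y :: real
  proof (cases "\<bar>y\<bar> \<le> 1")
    case True
    then have "\<bar>y\<bar> ^ j \<le> 1"
      by (simp add: power_le_one)
    then show ?thesis
      using zero_le_power[of "\<bar>y\<bar>" p] by linarith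
  next
    case False
    then have "\<bar>y\<bar> ^ j \<le> \<bar>y\<bar> ^ p"
      using assms(4) by (intro power_increasing) auto
    then show ?thesis
      by linarith
  qed
  have "\<bar>moment \<mu> j\<bar> \<le> (\<integral>y. \<bar>y ^ j\<bar> \<partial>\<mu>)"
    unfolding moment_def by (rule integral_abs_bound)
  also have "\<dots> \<le> (\<integral>y. 1 + \<bar>y\<bar> ^ p \<partial>\<mu>)"
    using assms(3)
    by (intro integral_mono integrable_abs[OF assms(2)]) (simp_all add: power_abs abs_power_le)
  also have "\<dots> = 1 + (\<integral>y. \<bar>y\<bar> ^ p \<partial>\<mu>)"
    using assms(3) prob_space by simp
  also have "\<dots> \<le> (1 + (\<integral>y. \<bar>y\<bar> ^ p \<partial>\<mu>)) ^ j"
    using False by (intro self_le_power) (auto intro: integral_nonneg_AE)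
  finally show ?thesis .
qed

lemma integrable_power_if_integrable_abs_power:
  fixes \<mu> :: "real measure"
  assumes "sets \<mu> = sets borel" "integrable \<mu> (\<lambda>y. \<bar>y\<bar> ^ j)"
  shows "integrable \<mu> (\<lambda>y. y ^ j)"
proof -
  have "(\<lambda>y::real. y ^ j) \<in> borel_measurable borel"
    by simp
  then have "(\<lambda>y. y ^ j) \<in> borel_measurable \<mu>"
    by (subst measurable_cong_sets[OF assms(1) refl])
  then have "integrable \<mu> (\<lambda>y. \<bar>y ^ j\<bar>) = integrable \<mu> (\<lambda>y. y ^ j)"
    by (rule integrable_abs_iff)
  then show ?thesis
    using assms(2) by (simp add: power_abs)
qed

lemma moment_std_normal_distribution:
  shows "moment std_normal_distribution 1 = 0"
    and "moment std_normal_distribution 2 = 1"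
    and "moment std_normal_distribution j \<ge> 0"
proof -
  show "moment std_normal_distribution 1 = 0"
    unfolding moment_def by (rule integral_std_normal_distribution_moment_odd) simp
  show "moment std_normal_distribution 2 = 1"
    unfolding moment_def using std_normal_distribution_even_moments(1)[of 1] by simp
  show "moment std_normal_distribution j \<ge> 0"
    unfolding moment_def
    by (cases "even j")
      (auto elim!: evenE simp: std_normal_distribution_even_moments(1)
        integral_std_normal_distribution_moment_odd)
qed

lemma adm_tuples_subset_PiE: "adm_tuples r m \<subseteq> {..<r} \<rightarrow>\<^sub>E {..<m}"
  unfolding adm_tuples_def by auto

lemma integral_power2_chi:
  "(\<integral>x. (chi r m x)\<^sup>2 \<partial>P) = (\<integral>x. (\<Sum>n\<in>adm_tuples r m. \<Prod>i<r. x (n i))\<^sup>2 \<partial>P) / real m ^ r"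
proof -
  have "(inverse (sqrt (real m)) ^ r)\<^sup>2 = (inverse (sqrt (real m)) ^ 2) ^ r"
    by (metis power_mult mult.commute)
  also have "\<dots> = inverse (real m ^ r)"
    by (simp add: power_inverse)
  finally have "(inverse (sqrt (real m)) ^ r)\<^sup>2 = inverse (real m ^ r)" .
  then show ?thesis
    unfolding chi_def power_mult_distrib by (simp add: field_simps)
qed

lemma integral_power2_chi_le:
  fixes D :: real
  assumes "prob_space \<mu>" "\<And>j. integrable \<mu> (\<lambda>y. y ^ j)"
    and "prob_space \<nu>" "\<And>j. integrable \<nu> (\<lambda>y. y ^ j)"
    and "moment \<mu> 1 = 0" "moment \<nu> 1 = 0" "moment \<mu> 2 = moment \<nu> 2" "\<And>j. moment \<nu> j \<ge> 0"
    and "\<And>j. j \<le> 2 * r \<Longrightarrow> \<bar>moment \<mu> j\<bar> \<le> D ^ j" "D \<ge> 0"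
    and "m \<ge> 1"
  shows "(\<integral>x. (chi r m x)\<^sup>2 \<partial>PiM {..<m} (\<lambda>_. \<mu>)) \<le>
    (\<integral>x. (chi r m x)\<^sup>2 \<partial>PiM {..<m} (\<lambda>_. \<nu>)) + real r ^ (2 * r) * D ^ (2 * r) / real m"
proof -
  have "(\<integral>x. (chi r m x)\<^sup>2 \<partial>PiM {..<m} (\<lambda>_. \<mu>)) \<le>
    (\<integral>x. (chi r m x)\<^sup>2 \<partial>PiM {..<m} (\<lambda>_. \<nu>)) + real (card (rich_pairs r m)) * D ^ (2 * r) / real m ^ r"
    unfolding integral_power2_chi add_divide_distrib[symmetric]
    by (intro divide_right_mono integral_power2_sum_monomials_le[OF assms(1-10)]
        adm_tuples_subset_PiE zero_le_power of_nat_0_le_iff)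
  also have "real (card (rich_pairs r m)) * D ^ (2 * r) / real m ^ r \<le>
      real r ^ (2 * r) / real m * D ^ (2 * r)"
    using card_rich_pairs_div_power[OF assms(11)] assms(10)
    by (simp add: mult_right_mono flip: times_divide_eq_left)
  finally show ?thesis
    by simp
qed

theorem mainTheorem17:
  fixes r :: nat and \<mu> :: "real measure"
  assumes "prob_space \<mu>" and "sets \<mu> = sets borel"
    and "\<And>k::nat. integrable \<mu> (\<lambda>x. \<bar>x\<bar> ^ k)"
    and "(\<integral>x. x \<partial>\<mu>) = 0" and "(\<integral>x. x\<^sup>2 \<partial>\<mu>) = 1"
  shows "\<exists>C>0. \<forall>m\<ge>1.
    (\<integral>x. (chi r m x)\<^sup>2 \<partial>(PiM {..<m} (\<lambda>_. \<mu>)))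
      \<le> (\<integral>x. (chi r m x)\<^sup>2 \<partial>(PiM {..<m} (\<lambda>_. std_normal_distribution))) + C / real m"
proof -
  define D where "D = 1 + (\<integral>y. \<bar>y\<bar> ^ (2 * r) \<partial>\<mu>)"
  define C where "C = real r ^ (2 * r) * D ^ (2 * r) + 1"
  have "D \<ge> 0"
    unfolding D_def by (auto intro: add_nonneg_nonneg integral_nonneg_AE)
  have int: "integrable \<mu> (\<lambda>y. y ^ j)" for j
    by (rule integrable_power_if_integrable_abs_power[OF assms(2,3)])
  have gauss: "prob_space std_normal_distribution"
    by (simp add: prob_space_normal_density)
  have moments: "moment \<mu> 1 = 0" "moment \<mu> 2 = moment std_normal_distribution 2"
    using assms(4,5) moment_std_normal_distribution(2) by (simp_all add: moment_def)
  have moment_bound: "\<bar>moment \<mu> j\<bar> \<le> D ^ j" if "j \<le> 2 * r" for j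
    using abs_moment_le[OF assms(1) int assms(3) that] unfolding D_def .
  have "C > 0"
    unfolding C_def using \<open>D \<ge> 0\<close> by (intro add_nonneg_pos) simp_all
  moreover have "real r ^ (2 * r) * D ^ (2 * r) / real m \<le> C / real m" for m
    unfolding C_def by (simp add: divide_right_mono)
  ultimately show ?thesis
    using integral_power2_chi_le[OF assms(1) int gauss integrable_std_normal_distribution_moment
        moments(1) moment_std_normal_distribution(1) moments(2) moment_std_normal_distribution(3)
        moment_bound \<open>D \<ge> 0\<close>]
    by (meson add_left_mono order.trans)
qed

end
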